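(* Let $d\ge 2$, let $\bm{k}_1,\ldots,\bm{k}_d\in\mathbb{R}^d$ be a basis of $\mathbb{R}^d$ with $\mathsf{K}=[\bm{k}_1,\ldots,\bm{k}_d]$, and let $\mathfrak{a},\mathfrak{b}\in\mathbb{R}$. For $\bm{u}=[\alpha_1,\ldots,\alpha_d,\beta_1,\ldots,\beta_d]^T\in\mathbb{C}^{2d}$ and $\bm{x}\in\mathbb{R}^d$ let $p(\bm{x};\bm{u})=\sum_{j=1}^d\alpha_j e^{i\bm{k}_j\cdot\bm{x}}+\beta_j e^{-i\bm{k}_j\cdot\bm{x}}$, $\psi(\bm{x};\bm{u})=\mathfrak{a}|p(\bm{x};\bm{u})|^2-\mathfrak{b}|\nabla_{\bm{x}}p(\bm{x};\bm{u})|^2$, and let $\mathsf{Q}(\bm{0})$ be the Hermitian matrix with $\psi(\bm{0};\bm{u})=\bm{u}^*\mathsf{Q}(\bm{0})\bm{u}$. Fix a sign $\pm$ (with $\mp$ denoting the opposite sign), and let $\bm{u}=[\bm{v};\pm\bm{v}]$, $\bm{v}\in\mathbb{R}^d$, be a real unit-norm eigenvector of $\mathsf{Q}(\bm{0})$ with eigenvalue $\lambda$. Let $$T^\pm_{\lambda,\bm{u}}=\{\bm{s}\in\{0,1\}^d:\ [(-1)^{\bm{s}}\odot\bm{v};\mp(-1)^{\bm{s}}\odot\bm{v}]\ \text{is in the }\lambda\text{-eigenspace of }\mathsf{Q}(\bm{0})\}.$$ Then for every $\bm{n}\in\mathbb{Z}^d$ and every $\bm{s}\in T^\pm_{\lambda,\bm{u}}$,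 the set $L_{\lambda,\bm{u}}=\{\bm{x}\in\mathbb{R}^d:\psi(\bm{x};\bm{u})=\lambda\}$ contains the line $$\{\mathsf{K}^{-T}(\theta(-1)^{\bm{s}}+2\pi\bm{n}):\theta\in\mathbb{R}\}.$$
   Context: $[\bm{x};\bm{y}]$ denotes the vertical stacking of vectors $\bm{x},\bm{y}$. For $\bm{s}\in\{0,1\}^d$, $(-1)^{\bm{s}}=[(-1)^{s_1},\ldots,(-1)^{s_d}]$, and $\odot$ is the componentwise (Hadamard) product. *)

theory Defs
  imports "HOL-Analysis.Analysis"
begin

text \<open>u in C^(2d) is indexed by 'd + 'd: Inl j gives alpha_j, Inr j gives beta_j.\<close>

definition pfun :: "real^'d^'d \<Rightarrow> complex^('d+'d) \<Rightarrow> real^'d \<Rightarrow> complex" where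
  "pfun K u x = (\<Sum>j\<in>UNIV. u $ Inl j * exp (\<i> * complex_of_real (column j K \<bullet> x))
                          + u $ Inr j * exp (- \<i> * complex_of_real (column j K \<bullet> x)))"

definition pdp :: "real^'d^'d \<Rightarrow> complex^('d+'d) \<Rightarrow> real^'d \<Rightarrow> 'd \<Rightarrow> complex" where
  "pdp K u x c = vector_derivative (\<lambda>t::real. pfun K u (x + t *\<^sub>R axis c 1)) (at 0)"

definition psi :: "real \<Rightarrow> real \<Rightarrow> real^'d^'d \<Rightarrow> real^'d \<Rightarrow> complex^('d+'d) \<Rightarrow> real" where
  "psi a b K x u = a * (cmod (pfun K u x))\<^sup>2 - b * (\<Sum>c\<in>UNIV. (cmod (pdp K u x c))\<^sup>2)"

definition hermitian :: "complex^'n^'n \<Rightarrow> bool" where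
  "hermitian Q \<longleftrightarrow> (\<forall>i j. Q $ i $ j = cnj (Q $ j $ i))"

definition qform :: "complex^'n^'n \<Rightarrow> complex^'n \<Rightarrow> complex" where
  "qform Q u = (\<Sum>i\<in>UNIV. cnj (u $ i) * (Q *v u) $ i)"

definition stack :: "real^'d \<Rightarrow> real \<Rightarrow> complex^('d+'d)" where
  "stack v \<sigma> = (\<chi> i. case i of Inl j \<Rightarrow> complex_of_real (v $ j)
                             | Inr j \<Rightarrow> complex_of_real (\<sigma> * v $ j))"

definition signs :: "nat^'d \<Rightarrow> real^'d" where
  "signs s = (\<chi> j. (-1) ^ (s $ j))"

definition Tset :: "complex^('d+'d)^('d+'d) \<Rightarrow> real \<Rightarrow> real^'d \<Rightarrow> real \<Rightarrow> (nat^'d) set" where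
  "Tset Q lam v \<sigma> = {s. (\<forall>j. s $ j \<in> {0,1}) \<and>
      (let w = stack (\<chi> j. signs s $ j * v $ j) (- \<sigma>)
       in Q *v w = complex_of_real lam *s w)}"

end

theory Submission
  imports Defs
begin

text \<open>
  On the line, \<open>K\<^sup>T x = \<theta> (-1)^s + 2\<pi> n\<close>, so every phase \<open>k\<^sub>j \<bullet> x\<close> has cosine \<open>cos \<theta>\<close>
  and sine \<open>(-1)^(s\<^sub>j) sin \<theta>\<close>. For a real vector \<open>u = [v; \<sigma>v]\<close> the real and imaginary
  parts of \<open>p\<close> and \<open>\<nabla>p\<close> are then multiples of \<open>cos \<theta>\<close> or \<open>sin \<theta>\<close>, and regrouping gives
  \<open>\<psi>(x; [v; \<sigma>v]) = cos\<^sup>2\<theta> \<psi>(0; [v; \<sigma>v]) + sin\<^sup>2\<theta> \<psi>(0; [w; -\<sigma>w])\<close> with \<open>w = (-1)^s \<odot> v\<close>.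
  Both values at \<open>0\<close> are Rayleigh quotients of unit \<open>\<lambda>\<close>-eigenvectors of \<open>Q(0)\<close>, hence equal \<open>\<lambda>\<close>.
\<close>

lemma matrix_inv_right:
  fixes A :: "'a::semiring_1^'n^'n"
  assumes "invertible A"
  shows "A ** matrix_inv A = mat 1"
  using someI_ex[OF assms[unfolded invertible_def]] unfolding matrix_inv_def by blast

lemma inner_column_eq_transpose: "column j K \<bullet> x = (transpose K *v x) $ j"
  by (simp add: column_def transpose_def matrix_vector_mult_def inner_vec_def mult.commute)

lemma inner_column_matrix_inv_transpose:
  fixes K :: "real^'d^'d"
  assumes "invertible K"
  shows "column j K \<bullet> (matrix_inv (transpose K) *v y) = y $ j"
  using matrix_inv_right[OF transpose_invertible[OF assms]]
  by (simp add: inner_column_eq_transpose matrix_vector_mul_assoc)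

lemma sum_UNIV_Plus:
  fixes f :: "'a::finite + 'b::finite \<Rightarrow> 'c::comm_monoid_add"
  shows "(\<Sum>i\<in>UNIV. f i) = (\<Sum>j\<in>UNIV. f (Inl j)) + (\<Sum>j\<in>UNIV. f (Inr j))"
  using sum.Plus[of "UNIV::'a set" "UNIV::'b set" f] by (simp add: comp_def)

lemma pdp_eq:
  "pdp K u x c = (\<Sum>j\<in>UNIV. u $ Inl j * (\<i> * K$c$j) * exp (\<i> * complex_of_real (column j K \<bullet> x))
     + u $ Inr j * (- \<i> * K$c$j) * exp (- \<i> * complex_of_real (column j K \<bullet> x)))"
proof -
  define g :: "complex \<Rightarrow> complex" where
    "g = (\<lambda>z. \<Sum>j\<in>UNIV. u $ Inl j * exp (\<i> * (complex_of_real (column j K \<bullet> x) + z * of_real (K$c$j)))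
       + u $ Inr j * exp (- \<i> * (complex_of_real (column j K \<bullet> x) + z * of_real (K$c$j))))"
  have line: "(\<lambda>t::real. pfun K u (x + t *\<^sub>R axis c 1)) = (\<lambda>t. g (of_real t))"
    by (rule ext) (simp add: g_def pfun_def inner_add_right inner_axis column_def algebra_simps)
  have "(g has_field_derivative (\<Sum>j\<in>UNIV. u $ Inl j * (\<i> * K$c$j) * exp (\<i> * complex_of_real (column j K \<bullet> x))
     + u $ Inr j * (- \<i> * K$c$j) * exp (- \<i> * complex_of_real (column j K \<bullet> x)))) (at (of_real 0))"
    unfolding g_def by (auto intro!: derivative_eq_intros sum.cong simp: algebra_simps)
  then show ?thesis
    unfolding pdp_def line by (intro vector_derivative_at has_vector_derivative_real_field)
qed

lemma exp_i_times_real: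
  "exp (\<i> * complex_of_real t) = Complex (cos t) (sin t)"
  "exp (- \<i> * complex_of_real t) = Complex (cos t) (- sin t)"
  "exp (- (\<i> * complex_of_real t)) = Complex (cos t) (- sin t)"
  by (simp_all add: exp_eq_polar cis.ctr)

lemma Re_pfun_stack: "Re (pfun K (stack w \<tau>) x) = (\<Sum>j\<in>UNIV. w$j * (1 + \<tau>) * cos (column j K \<bullet> x))"
  and Im_pfun_stack: "Im (pfun K (stack w \<tau>) x) = (\<Sum>j\<in>UNIV. w$j * (1 - \<tau>) * sin (column j K \<bullet> x))"
  unfolding pfun_def stack_def Re_sum Im_sum by (simp_all add: exp_i_times_real algebra_simps)

lemma Re_pdp_stack:
    "Re (pdp K (stack w \<tau>) x c) = - (\<Sum>j\<in>UNIV. w$j * K$c$j * (1 + \<tau>) * sin (column j K \<bullet> x))"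
  and Im_pdp_stack:
    "Im (pdp K (stack w \<tau>) x c) = (\<Sum>j\<in>UNIV. w$j * K$c$j * (1 - \<tau>) * cos (column j K \<bullet> x))"
  unfolding pdp_eq stack_def Re_sum Im_sum
  by (simp_all add: exp_i_times_real algebra_simps flip: sum_negf)

lemma psi_stack:
  "psi a b K x (stack w \<tau>) =
     a * ((\<Sum>j\<in>UNIV. w$j * (1 + \<tau>) * cos (column j K \<bullet> x))\<^sup>2
          + (\<Sum>j\<in>UNIV. w$j * (1 - \<tau>) * sin (column j K \<bullet> x))\<^sup>2)
   - b * (\<Sum>c\<in>UNIV. (\<Sum>j\<in>UNIV. w$j * K$c$j * (1 + \<tau>) * sin (column j K \<bullet> x))\<^sup>2
                   + (\<Sum>j\<in>UNIV. w$j * K$c$j * (1 - \<tau>) * cos (column j K \<bullet> x))\<^sup>2)"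
  unfolding psi_def cmod_power2 Re_pfun_stack Im_pfun_stack Re_pdp_stack Im_pdp_stack by simp

lemma psi_stack_phase_line:
  assumes cos_phase: "\<And>j. cos (column j K \<bullet> x) = cos \<theta>"
    and sin_phase: "\<And>j. sin (column j K \<bullet> x) = e$j * sin \<theta>"
  shows "psi a b K x (stack v \<sigma>) =
    (cos \<theta>)\<^sup>2 * psi a b K 0 (stack v \<sigma>)
    + (sin \<theta>)\<^sup>2 * psi a b K 0 (stack (\<chi> j. e$j * v$j) (- \<sigma>))"
proof -
  define A where "A = (\<Sum>j\<in>UNIV. v$j)"
  define C where "C = (\<Sum>j\<in>UNIV. e$j * v$j)"
  define B where "B c = (\<Sum>j\<in>UNIV. e$j * v$j * K$c$j)" for c
  define D where "D c = (\<Sum>j\<in>UNIV. v$j * K$c$j)" for c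
  have phase_sums:
    "(\<Sum>j\<in>UNIV. v$j * (1 + \<sigma>) * cos (column j K \<bullet> x)) = cos \<theta> * ((1 + \<sigma>) * A)"
    "(\<Sum>j\<in>UNIV. v$j * (1 - \<sigma>) * sin (column j K \<bullet> x)) = sin \<theta> * ((1 - \<sigma>) * C)"
    "(\<Sum>j\<in>UNIV. v$j * K$c$j * (1 + \<sigma>) * sin (column j K \<bullet> x)) = sin \<theta> * ((1 + \<sigma>) * B c)"
    "(\<Sum>j\<in>UNIV. v$j * K$c$j * (1 - \<sigma>) * cos (column j K \<bullet> x)) = cos \<theta> * ((1 - \<sigma>) * D c)"
    for c
    unfolding cos_phase sin_phase A_def B_def C_def D_def by (simp_all add: sum_distrib_left mult_ac)
  have "psi a b K x (stack v \<sigma>) =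
      (cos \<theta>)\<^sup>2 * (a * ((1 + \<sigma>) * A)\<^sup>2 - b * (\<Sum>c\<in>UNIV. ((1 - \<sigma>) * D c)\<^sup>2))
    + (sin \<theta>)\<^sup>2 * (a * ((1 - \<sigma>) * C)\<^sup>2 - b * (\<Sum>c\<in>UNIV. ((1 + \<sigma>) * B c)\<^sup>2))"
    unfolding psi_stack phase_sums power_mult_distrib
    by (simp add: sum.distrib sum_distrib_left right_diff_distrib distrib_left mult_ac)
  also have "a * ((1 + \<sigma>) * A)\<^sup>2 - b * (\<Sum>c\<in>UNIV. ((1 - \<sigma>) * D c)\<^sup>2) = psi a b K 0 (stack v \<sigma>)"
    unfolding psi_stack A_def D_def by (simp add: sum_distrib_left mult_ac)
  also have "a * ((1 - \<sigma>) * C)\<^sup>2 - b * (\<Sum>c\<in>UNIV. ((1 + \<sigma>) * B c)\<^sup>2)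
      = psi a b K 0 (stack (\<chi> j. e$j * v$j) (- \<sigma>))"
    unfolding psi_stack B_def C_def by (simp add: sum_distrib_left mult_ac)
  finally show ?thesis .
qed

lemma power2_norm_vec: "(norm z)\<^sup>2 = (\<Sum>i\<in>UNIV. (norm (z$i))\<^sup>2)"
  unfolding norm_vec_def L2_set_def by (simp add: sum_nonneg)

lemma power2_norm_stack: "(norm (stack w \<tau>))\<^sup>2 = (1 + \<tau>\<^sup>2) * (\<Sum>j\<in>UNIV. (w$j)\<^sup>2)"
proof -
  have "(norm (stack w \<tau>))\<^sup>2 = (\<Sum>i\<in>UNIV. (cmod (stack w \<tau> $ i))\<^sup>2)"
    by (rule power2_norm_vec)
  also have "\<dots> = (1 + \<tau>\<^sup>2) * (\<Sum>j\<in>UNIV. (w$j)\<^sup>2)"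
    unfolding sum_UNIV_Plus
    by (simp add: stack_def sum_distrib_left power_mult_distrib norm_mult sum.distrib algebra_simps)
  finally show ?thesis .
qed

lemma norm_stack_flip_signs:
  assumes "\<And>j. \<bar>e$j\<bar> = 1"
  shows "norm (stack (\<chi> j. e$j * v$j) (- \<sigma>)) = norm (stack v \<sigma>)"
proof -
  have "(e$j)\<^sup>2 = 1" for j
    using assms[of j] by (metis power2_abs one_power2)
  then have "(norm (stack (\<chi> j. e$j * v$j) (- \<sigma>)))\<^sup>2 = (norm (stack v \<sigma>))\<^sup>2"
    unfolding power2_norm_stack by (simp add: power_mult_distrib)
  then show ?thesis by simp
qed

lemma qform_eigenvector:
  assumes "Q *v z = complex_of_real lam *s z"
  shows "qform Q z = complex_of_real (lam * (norm z)\<^sup>2)"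
proof -
  have "qform Q z = complex_of_real lam * (\<Sum>i\<in>UNIV. z$i * cnj (z$i))"
    unfolding qform_def assms by (simp add: sum_distrib_left mult_ac)
  also have "(\<Sum>i\<in>UNIV. z$i * cnj (z$i)) = complex_of_real ((norm z)\<^sup>2)"
    unfolding power2_norm_vec by (simp flip: complex_norm_square)
  finally show ?thesis by simp
qed

lemma psi_zero_eigenvector:
  assumes "\<forall>u. complex_of_real (psi a b K 0 u) = qform Q u"
    and "Q *v z = complex_of_real lam *s z"
  shows "psi a b K 0 z = lam * (norm z)\<^sup>2"
proof -
  have "complex_of_real (psi a b K 0 z) = complex_of_real (lam * (norm z)\<^sup>2)"
    using assms(1) qform_eigenvector[OF assms(2)] by simp
  then show ?thesis
    by (simp only: of_real_eq_iff)
qed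

lemma cos_sin_sign_plus_2pi_int:
  fixes m :: int
  shows "cos (\<theta> * (-1) ^ k + 2 * pi * of_int m) = cos \<theta>"
    and "sin (\<theta> * (-1) ^ k + 2 * pi * of_int m) = (-1) ^ k * sin \<theta>"
proof -
  have "cos (y + 2 * pi * of_int m) = cos y" "sin (y + 2 * pi * of_int m) = sin y" for y :: real
    by (simp_all add: cos_add sin_add)
  moreover have "cos (\<theta> * (-1) ^ k) = cos \<theta>" "sin (\<theta> * (-1) ^ k) = (-1) ^ k * sin \<theta>"
    by (cases "even k"; simp)+
  ultimately show "cos (\<theta> * (-1) ^ k + 2 * pi * of_int m) = cos \<theta>"
    and "sin (\<theta> * (-1) ^ k + 2 * pi * of_int m) = (-1) ^ k * sin \<theta>"
    by simp_all
qed

theorem lemma2p7: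
  fixes K :: "real^'d^'d" and a b :: real
    and Q :: "complex^('d+'d)^('d+'d)" and \<sigma> lam :: real and v :: "real^'d"
  assumes "CARD('d) \<ge> 2"
    and "invertible K"
    and "hermitian Q"
    and "\<forall>u. complex_of_real (psi a b K 0 u) = qform Q u"
    and "\<sigma> = 1 \<or> \<sigma> = -1"
    and "Q *v stack v \<sigma> = complex_of_real lam *s stack v \<sigma>"
    and "norm (stack v \<sigma>) = 1"
  shows "\<forall>n::int^'d. \<forall>s\<in>Tset Q lam v \<sigma>. \<forall>\<theta>::real.
           psi a b K (matrix_inv (transpose K) *v
                (\<theta> *\<^sub>R signs s + (2 * pi) *\<^sub>R (\<chi> j. real_of_int (n $ j)))) (stack v \<sigma>) = lam"
proof (intro allI ballI)
  fix n :: "int^'d" and s \<theta>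
  assume "s \<in> Tset Q lam v \<sigma>"
  define w where "w = stack (\<chi> j. signs s $ j * v $ j) (- \<sigma>)"
  have eigen_w: "Q *v w = complex_of_real lam *s w"
    using \<open>s \<in> Tset Q lam v \<sigma>\<close> unfolding Tset_def Let_def w_def mem_Collect_eq by (rule conjunct2)
  have norm_w: "norm w = norm (stack v \<sigma>)"
    unfolding w_def by (rule norm_stack_flip_signs) (simp add: signs_def)
  have psi_w: "psi a b K 0 w = lam"
    using psi_zero_eigenvector[OF assms(4) eigen_w] norm_w assms(7) by simp
  have psi_v: "psi a b K 0 (stack v \<sigma>) = lam"
    using psi_zero_eigenvector[OF assms(4,6)] assms(7) by simp
  define x where "x = matrix_inv (transpose K) *v (\<theta> *\<^sub>R signs s + (2 * pi) *\<^sub>R (\<chi> j. real_of_int (n $ j)))"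
  have "cos (column j K \<bullet> x) = cos \<theta>" "sin (column j K \<bullet> x) = signs s $ j * sin \<theta>" for j
    unfolding x_def inner_column_matrix_inv_transpose[OF assms(2)]
    by (simp_all add: signs_def cos_sin_sign_plus_2pi_int)
  then have "psi a b K x (stack v \<sigma>) =
      (cos \<theta>)\<^sup>2 * psi a b K 0 (stack v \<sigma>) + (sin \<theta>)\<^sup>2 * psi a b K 0 w"
    unfolding w_def by (rule psi_stack_phase_line)
  also have "\<dots> = lam"
    unfolding psi_v psi_w distrib_right[symmetric] sin_cos_squared_add2 by simp
  finally show "psi a b K (matrix_inv (transpose K) *v
      (\<theta> *\<^sub>R signs s + (2 * pi) *\<^sub>R (\<chi> j. real_of_int (n $ j)))) (stack v \<sigma>) = lam"
    unfolding x_def .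
qed

end
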